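(* Let $n,r\ge1$, $A_{-1}\in\mathbb{R}^{n\times n}$, $B\in\mathbb{R}^{n\times r}$, and let $A_2,A_3$ be $n\times n$ matrix functions on $[-1,0]$ with entries in $L_2([-1,0],\mathbb{C})$. For a matrix $M\in\mathbb{C}^{n\times n}$ define $$\Delta_M(\lambda)=\lambda I-\lambda e^{-\lambda}M-\lambda\int_{-1}^0e^{\lambda s}A_2(s)\,ds-\int_{-1}^0e^{\lambda s}A_3(s)\,ds,\quad\lambda\in\mathbb{C}.$$ Say that a pair $(M,B)$ satisfies conditions (i) and (ii) if: (i) $\operatorname{rank}(\Delta_M(\lambda)\ \ B)=n$ for every $\lambda\in\mathbb{C}$ (equivalently, there are no $\lambda\in\mathbb{C}$ and $y\in\mathbb{C}^n\setminus\{0\}$ with $\Delta_M(\lambda)^*y=0$ and $B^*y=0$); (ii) $\operatorname{rank}(B\ \ MB\ \cdots\ M^{n-1}B)=n$. If $(A_{-1},B)$ satisfies conditions (i) and (ii), then for every matrix $P\in\mathbb{C}^{r\times n}$ the pair $(A_{-1}+BP,B)$ satisfies conditions (i) and (ii) (with the same $A_2,A_3$). *)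

theory Defs
  imports "HOL-Analysis.Analysis" "Jordan_Normal_Form.DL_Rank"
begin

definition L2_on_unit :: "(real \<Rightarrow> complex) \<Rightarrow> bool" where
  "L2_on_unit f \<longleftrightarrow> f measurable_on {-1..0} \<and> (\<lambda>s. (cmod (f s))^2) integrable_on {-1..0}"

definition L2_matfun :: "nat \<Rightarrow> (real \<Rightarrow> complex mat) \<Rightarrow> bool" where
  "L2_matfun n A \<longleftrightarrow> (\<forall>s\<in>{-1..0}. A s \<in> carrier_mat n n) \<and>
     (\<forall>i<n. \<forall>j<n. L2_on_unit (\<lambda>s. A s $$ (i,j)))"

definition exp_int :: "nat \<Rightarrow> (real \<Rightarrow> complex mat) \<Rightarrow> complex \<Rightarrow> complex mat" where
  "exp_int n A l = Matrix.mat n n (\<lambda>(i,j). integral {-1..0} (\<lambda>s. exp (l * complex_of_real s) * A s $$ (i,j)))"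

definition Delta :: "nat \<Rightarrow> (real \<Rightarrow> complex mat) \<Rightarrow> (real \<Rightarrow> complex mat) \<Rightarrow> complex mat \<Rightarrow> complex \<Rightarrow> complex mat" where
  "Delta n A2 A3 M l = l \<cdot>\<^sub>m 1\<^sub>m n - (l * exp (- l)) \<cdot>\<^sub>m M - l \<cdot>\<^sub>m exp_int n A2 l - exp_int n A3 l"

definition hjoin :: "'a mat \<Rightarrow> 'a mat \<Rightarrow> 'a mat" where
  "hjoin A B = Matrix.mat (dim_row A) (dim_col A + dim_col B)
     (\<lambda>(i,j). if j < dim_col A then A $$ (i,j) else B $$ (i, j - dim_col A))"

text \<open>Kalman controllability matrix (B  MB  ...  M^(n-1) B), of size n x (n r).\<close>
definition ctrb :: "nat \<Rightarrow> nat \<Rightarrow> 'a::comm_ring_1 mat \<Rightarrow> 'a mat \<Rightarrow> 'a mat" where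
  "ctrb n r M B = Matrix.mat n (n * r) (\<lambda>(i,j). ((M ^\<^sub>m (j div r)) * B) $$ (i, j mod r))"

definition cond_i :: "nat \<Rightarrow> (real \<Rightarrow> complex mat) \<Rightarrow> (real \<Rightarrow> complex mat) \<Rightarrow> complex mat \<Rightarrow> complex mat \<Rightarrow> bool" where
  "cond_i n A2 A3 M B \<longleftrightarrow> (\<forall>l::complex. vec_space.rank n (hjoin (Delta n A2 A3 M l) B) = n)"

definition cond_ii :: "nat \<Rightarrow> nat \<Rightarrow> complex mat \<Rightarrow> complex mat \<Rightarrow> bool" where
  "cond_ii n r M B \<longleftrightarrow> vec_space.rank n (ctrb n r M B) = n"

end

theory Submission
  imports Defs
begin

text \<open>
  State feedback \<open>M \<mapsto> M + B P\<close> changes neither column space. For (i),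
  \<open>Delta (M + B P) \<lambda> = Delta M \<lambda> + B Q\<close> with \<open>Q = -\<lambda> e\<^sup>-\<^sup>\<lambda> P\<close>, and the columns of \<open>B Q\<close> lie in
  the span of the columns of \<open>B\<close>. For (ii), induction on \<open>k\<close> shows that every column of
  \<open>(M + B P)\<^sup>k B\<close> is a combination of columns of \<open>B, M B, \<dots>, M\<^sup>k B\<close>. As
  \<open>M = (M + B P) + B (-P)\<close>, both inclusions hold and the ranks agree.
\<close>

lemma pow_mat_Suc_left: "A \<in> carrier_mat n n \<Longrightarrow> A ^\<^sub>m Suc k = A * A ^\<^sub>m k"
proof (induction k)
  case (Suc k)
  then have "A ^\<^sub>m Suc (Suc k) = (A * A ^\<^sub>m k) * A" by simp
  also have "\<dots> = A * (A ^\<^sub>m k * A)" using Suc.prems by (subst assoc_mult_mat) auto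
  finally show ?case by simp
qed simp

lemma pow_mat_Suc_mult:
  "A \<in> carrier_mat n n \<Longrightarrow> B \<in> carrier_mat n r \<Longrightarrow> A ^\<^sub>m Suc k * B = A * (A ^\<^sub>m k * B)"
  by (simp only: pow_mat_Suc_left) (rule assoc_mult_mat, auto)

lemma add_mult_uminus_cancel:
  fixes D :: "'a :: comm_ring_1 mat"
  assumes D: "D \<in> carrier_mat n m" and B: "B \<in> carrier_mat n r" and Q: "Q \<in> carrier_mat r m"
  shows "D + B * Q + B * (- Q) = D"
proof -
  have BQ: "B * Q \<in> carrier_mat n m" using B Q by simp
  have "B * (- Q) = - (B * Q)" using B Q by (intro uminus_mult_right_mat) simp
  then show ?thesis using D BQ by (simp add: add_uminus_minus_mat)
qed

lemma lessThan_add_split: "{..<m + r} = {..<m} \<union> (\<lambda>j. j + m) ` {..<(r::nat)}"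
proof (intro Set.set_eqI iffI)
  fix x assume x: "x \<in> {..<m + r}"
  show "x \<in> {..<m} \<union> (\<lambda>j. j + m) ` {..<r}"
  proof (cases "x < m")
    case False
    then have "x = (x - m) + m" "x - m < r" using x by auto
    then show ?thesis by blast
  qed simp
qed auto

lemma hjoin_carrier:
  "D \<in> carrier_mat n m \<Longrightarrow> B \<in> carrier_mat n r \<Longrightarrow> hjoin D B \<in> carrier_mat n (m + r)"
  by (auto simp: hjoin_def)

lemma set_cols_hjoin:
  assumes D: "D \<in> carrier_mat n m" and B: "B \<in> carrier_mat n r"
  shows "set (cols (hjoin D B)) = set (cols D) \<union> set (cols B)"
proof -
  have col_D: "col (hjoin D B) j = col D j" if "j < m" for j
    using that D B by (auto simp: hjoin_def intro!: eq_vecI)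
  have col_B: "col (hjoin D B) (j + m) = col B j" if "j < r" for j
    using that D B by (auto simp: hjoin_def intro!: eq_vecI)
  have "set (cols (hjoin D B)) = col (hjoin D B) ` {..<m} \<union> (\<lambda>j. col (hjoin D B) (j + m)) ` {..<r}"
    using hjoin_carrier[OF D B] by (simp add: cols_def atLeast0LessThan lessThan_add_split image_Un image_image)
  also have "\<dots> = set (cols D) \<union> set (cols B)"
    using D B col_D col_B by (simp add: cols_def atLeast0LessThan)
  finally show ?thesis .
qed

definition krylov_cols :: "nat \<Rightarrow> nat \<Rightarrow> 'a :: semiring_1 mat \<Rightarrow> 'a mat \<Rightarrow> 'a vec set" where
  "krylov_cols k r M B = {col (M ^\<^sub>m j * B) a | j a. j < k \<and> a < r}"

lemma ctrb_carrier: "ctrb n r M B \<in> carrier_mat n (n * r)"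
  by (simp add: ctrb_def)

lemma krylov_cols_carrier: "M \<in> carrier_mat n n \<Longrightarrow> krylov_cols k r M B \<subseteq> carrier_vec n"
  unfolding krylov_cols_def using col_dim[of "M ^\<^sub>m _ * B"] by auto

lemma krylov_cols_mono: "k \<le> k' \<Longrightarrow> krylov_cols k r M B \<subseteq> krylov_cols k' r M B"
  unfolding krylov_cols_def by (blast intro: less_le_trans)

lemma set_cols_subset_krylov_cols:
  assumes "M \<in> carrier_mat n n" and "B \<in> carrier_mat n r" and "0 < k"
  shows "set (cols B) \<subseteq> krylov_cols k r M B"
proof
  fix v assume "v \<in> set (cols B)"
  then obtain a where "a < r" "v = col (M ^\<^sub>m 0 * B) a"
    using assms by (auto simp: cols_def)
  then show "v \<in> krylov_cols k r M B"
    using \<open>0 < k\<close> unfolding krylov_cols_def by blast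
qed

lemma mult_mat_vec_krylov_cols:
  assumes M: "M \<in> carrier_mat n n" and B: "B \<in> carrier_mat n r"
    and s: "s \<in> krylov_cols k r M B"
  shows "M *\<^sub>v s \<in> krylov_cols (Suc k) r M B"
proof -
  obtain j a where ja: "j < k" "a < r" "s = col (M ^\<^sub>m j * B) a"
    using s unfolding krylov_cols_def by blast
  have "M ^\<^sub>m j * B \<in> carrier_mat n r" using mult_carrier_mat[OF pow_carrier_mat[OF M] B] .
  then have "M *\<^sub>v s = col (M * (M ^\<^sub>m j * B)) a"
    using ja(2,3) by (metis col_mult2[OF M])
  also have "\<dots> = col (M ^\<^sub>m Suc j * B) a"
    using M B by (simp only: pow_mat_Suc_mult)
  finally have "M *\<^sub>v s = col (M ^\<^sub>m Suc j * B) a" .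
  moreover have "Suc j < Suc k" using ja(1) by simp
  ultimately show ?thesis
    using ja(2) unfolding krylov_cols_def by blast
qed

lemma set_cols_ctrb:
  assumes M: "M \<in> carrier_mat n n" and B: "B \<in> carrier_mat n r" and r: "0 < r"
  shows "set (cols (ctrb n r M B)) = krylov_cols n r M B"
proof -
  have col_ctrb: "col (ctrb n r M B) c = col (M ^\<^sub>m (c div r) * B) (c mod r)"
    if "c < n * r" for c
    using that M B r by (auto simp: ctrb_def intro!: eq_vecI)
  have "set (cols (ctrb n r M B)) = col (ctrb n r M B) ` {..<n * r}"
    by (simp add: cols_def ctrb_def atLeast0LessThan)
  also have "\<dots> = (\<lambda>c. col (M ^\<^sub>m (c div r) * B) (c mod r)) ` {..<n * r}"
    by (rule image_cong) (simp_all add: col_ctrb)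
  also have "\<dots> = krylov_cols n r M B"
  proof (intro Set.set_eqI iffI)
    fix v assume "v \<in> (\<lambda>c. col (M ^\<^sub>m (c div r) * B) (c mod r)) ` {..<n * r}"
    then obtain c where "c < n * r" "v = col (M ^\<^sub>m (c div r) * B) (c mod r)" by blast
    moreover have "c div r < n" "c mod r < r"
      using \<open>c < n * r\<close> r by (simp_all add: less_mult_imp_div_less)
    ultimately show "v \<in> krylov_cols n r M B" unfolding krylov_cols_def by blast
  next
    fix v assume "v \<in> krylov_cols n r M B"
    then obtain j a where ja: "j < n" "a < r" "v = col (M ^\<^sub>m j * B) a"
      unfolding krylov_cols_def by blast
    have "j * r + a < Suc j * r" using ja(2) by simp
    also have "\<dots> \<le> n * r" using ja(1) by (intro mult_le_mono1) simp
    finally have "j * r + a \<in> {..<n * r}" by simp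
    moreover have "v = col (M ^\<^sub>m ((j * r + a) div r) * B) ((j * r + a) mod r)"
      using ja(2,3) by simp
    ultimately show "v \<in> (\<lambda>c. col (M ^\<^sub>m (c div r) * B) (c mod r)) ` {..<n * r}"
      by (rule rev_image_eqI)
  qed
  finally show ?thesis .
qed

lemma Delta_carrier: "M \<in> carrier_mat n n \<Longrightarrow> Delta n A2 A3 M l \<in> carrier_mat n n"
  by (auto simp: Delta_def exp_int_def)

lemma Delta_feedback:
  assumes M: "M \<in> carrier_mat n n" and B: "B \<in> carrier_mat n r" and P: "P \<in> carrier_mat r n"
  shows "Delta n A2 A3 (M + B * P) l = Delta n A2 A3 M l + B * ((- (l * exp (- l))) \<cdot>\<^sub>m P)"
  using M B P by (subst mult_smult_distrib[OF B P])
    (auto intro!: eq_matI simp: Delta_def exp_int_def algebra_simps)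

context vec_space
begin

lemma rank_eq_of_cols_in_span:
  assumes A: "A \<in> carrier_mat n a" and A': "A' \<in> carrier_mat n a'"
    and "set (cols A) \<subseteq> span (set (cols A'))" and "set (cols A') \<subseteq> span (set (cols A))"
  shows "rank A = rank A'"
proof -
  have "set (cols A) \<subseteq> carrier_vec n" "set (cols A') \<subseteq> carrier_vec n"
    using A A' cols_dim by blast+
  then have "span (set (cols A)) = span (set (cols A'))"
    using assms(3,4) by (intro subset_antisym span_subsetI)
  then show ?thesis unfolding rank_def by simp
qed

lemma mult_mat_vec_in_span_cols:
  assumes "B \<in> carrier_mat n r" and "x \<in> carrier_vec r"
    and "T \<subseteq> carrier_vec n" and "set (cols B) \<subseteq> T"
  shows "B *\<^sub>v x \<in> span T"
proof -
  have "B *\<^sub>v x \<in> span (set (cols B))"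
    using col_space_eq[of B r] assms(1,2) unfolding col_space_def by auto
  moreover have "span (set (cols B)) \<subseteq> span T"
    using assms(3,4) in_own_span by (intro span_subsetI) blast+
  ultimately show ?thesis by blast
qed

lemma mult_mat_vec_in_span:
  assumes A: "A \<in> carrier_mat n n" and S: "S \<subseteq> carrier_vec n" and U: "U \<subseteq> carrier_vec n"
    and image: "\<And>s. s \<in> S \<Longrightarrow> A *\<^sub>v s \<in> span U"
    and w: "w \<in> span S"
  shows "A *\<^sub>v w \<in> span U"
proof -
  obtain c F where w_eq: "w = lincomb c F" and F: "finite F" "F \<subseteq> S"
    using in_spanE[OF w] by blast
  from F have "A *\<^sub>v lincomb c F \<in> span U"
  proof (induction F rule: finite_induct)
    case empty
    have "0\<^sub>v n \<in> span U" by (rule in_spanI[of _ c "{}"]) (auto simp: lincomb_def)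
    moreover have "A *\<^sub>v 0\<^sub>v n = 0\<^sub>v n" using A by auto
    ultimately show ?case by (simp add: lincomb_def)
  next
    case (insert x F)
    have x: "x \<in> carrier_vec n" and F_carrier: "F \<subseteq> carrier_vec n" using insert S by auto
    then have "lincomb c (insert x F) = c x \<cdot>\<^sub>v x + lincomb c F"
      unfolding lincomb_def using insert by (subst M.finsum_insert) auto
    then have "A *\<^sub>v lincomb c (insert x F) = c x \<cdot>\<^sub>v (A *\<^sub>v x) + A *\<^sub>v lincomb c F"
      using A x F_carrier insert(1) lincomb_closed
      by (simp add: mult_add_distrib_mat_vec mult_mat_vec)
    moreover have "c x \<cdot>\<^sub>v (A *\<^sub>v x) \<in> span U"
      using smult_in_span[OF U image] insert by auto
    ultimately show ?case using insert span_add1[OF U] by auto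
  qed
  then show ?thesis using w_eq by simp
qed

lemma cols_hjoin_feedback_in_span:
  assumes D: "D \<in> carrier_mat n m" and B: "B \<in> carrier_mat n r" and Q: "Q \<in> carrier_mat r m"
  shows "set (cols (hjoin (D + B * Q) B)) \<subseteq> span (set (cols (hjoin D B)))"
proof -
  let ?T = "set (cols D) \<union> set (cols B)"
  have T: "?T \<subseteq> carrier_vec n" using D B cols_dim by blast
  have "set (cols (D + B * Q)) \<subseteq> span ?T"
  proof
    fix v assume "v \<in> set (cols (D + B * Q))"
    then obtain j where j: "j < m" "v = col (D + B * Q) j" using D B Q by (auto simp: cols_def)
    then have "v = col D j + B *\<^sub>v col Q j" using D B Q by auto
    moreover have "col D j \<in> span ?T" using j D in_own_span[OF T] by (auto simp: cols_def)
    moreover have "B *\<^sub>v col Q j \<in> span ?T"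
      using j Q by (intro mult_mat_vec_in_span_cols[OF B _ T]) auto
    ultimately show "v \<in> span ?T" using span_add1[OF T] by auto
  qed
  moreover have "set (cols B) \<subseteq> span ?T" using T in_own_span by blast
  moreover have "D + B * Q \<in> carrier_mat n m" using D B Q by auto
  ultimately show ?thesis using set_cols_hjoin[OF _ B] D by auto
qed

lemma rank_hjoin_feedback:
  assumes D: "D \<in> carrier_mat n m" and B: "B \<in> carrier_mat n r" and Q: "Q \<in> carrier_mat r m"
  shows "rank (hjoin (D + B * Q) B) = rank (hjoin D B)"
proof (rule rank_eq_of_cols_in_span)
  show "set (cols (hjoin (D + B * Q) B)) \<subseteq> span (set (cols (hjoin D B)))"
    using cols_hjoin_feedback_in_span[OF D B Q] .
  show "set (cols (hjoin D B)) \<subseteq> span (set (cols (hjoin (D + B * Q) B)))"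
  proof -
    have "D + B * Q \<in> carrier_mat n m" "- Q \<in> carrier_mat r m" using D B Q by auto
    from cols_hjoin_feedback_in_span[OF this(1) B this(2)]
    show ?thesis unfolding add_mult_uminus_cancel[OF D B Q] .
  qed
  show "hjoin (D + B * Q) B \<in> carrier_mat n (m + r)" using D B Q by (intro hjoin_carrier) auto
  show "hjoin D B \<in> carrier_mat n (m + r)" using D B by (rule hjoin_carrier)
qed

lemma col_pow_feedback_in_span_krylov_cols:
  assumes M: "M \<in> carrier_mat n n" and B: "B \<in> carrier_mat n r" and P: "P \<in> carrier_mat r n"
    and a: "a < r"
  shows "col ((M + B * P) ^\<^sub>m k * B) a \<in> span (krylov_cols (Suc k) r M B)"
proof (induction k)
  case 0
  have F0: "(M + B * P) ^\<^sub>m 0 * B = B" using M B P by simp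
  have "col B a \<in> set (cols B)" using B a by (simp add: cols_def)
  then have "col B a \<in> krylov_cols (Suc 0) r M B"
    by (rule subsetD[OF set_cols_subset_krylov_cols[OF M B zero_less_Suc]])
  then show ?case unfolding F0 by (rule subsetD[OF in_own_span[OF krylov_cols_carrier[OF M]]])
next
  case (Suc k)
  let ?F = "M + B * P" and ?K = "krylov_cols (Suc (Suc k)) r M B"
  let ?w = "col (?F ^\<^sub>m k * B) a"
  have F: "?F \<in> carrier_mat n n" using M B P by auto
  have K: "?K \<subseteq> carrier_vec n" using krylov_cols_carrier[OF M] .
  have X: "?F ^\<^sub>m k * B \<in> carrier_mat n r" using mult_carrier_mat[OF pow_carrier_mat[OF F] B] .
  then have w: "?w \<in> carrier_vec n" by (metis carrier_matD(1) col_dim)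
  have "col (?F ^\<^sub>m Suc k * B) a = col (?F * (?F ^\<^sub>m k * B)) a"
    using F B by (simp only: pow_mat_Suc_mult)
  also have "\<dots> = ?F *\<^sub>v ?w" using col_mult2[OF F X a] .
  also have "\<dots> = M *\<^sub>v ?w + (B * P) *\<^sub>v ?w"
    using M B P w by (intro add_mult_distrib_mat_vec) auto
  also have "\<dots> = M *\<^sub>v ?w + B *\<^sub>v (P *\<^sub>v ?w)"
    using B P w by (simp only: assoc_mult_mat_vec)
  finally have split: "col (?F ^\<^sub>m Suc k * B) a = M *\<^sub>v ?w + B *\<^sub>v (P *\<^sub>v ?w)" .
  have "M *\<^sub>v s \<in> span ?K" if "s \<in> krylov_cols (Suc k) r M B" for s
    using mult_mat_vec_krylov_cols[OF M B that] in_own_span[OF K] by blast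
  then have "M *\<^sub>v ?w \<in> span ?K"
    by (rule mult_mat_vec_in_span[OF M krylov_cols_carrier[OF M] K _ Suc.IH])
  moreover have "B *\<^sub>v (P *\<^sub>v ?w) \<in> span ?K"
    using P w by (intro mult_mat_vec_in_span_cols[OF B _ K set_cols_subset_krylov_cols[OF M B]]) auto
  ultimately show ?case unfolding split using span_add1[OF K] by simp
qed

lemma krylov_cols_feedback_in_span:
  assumes M: "M \<in> carrier_mat n n" and B: "B \<in> carrier_mat n r" and P: "P \<in> carrier_mat r n"
  shows "krylov_cols k r (M + B * P) B \<subseteq> span (krylov_cols k r M B)"
proof
  fix v assume "v \<in> krylov_cols k r (M + B * P) B"
  then obtain j a where ja: "j < k" "a < r" "v = col ((M + B * P) ^\<^sub>m j * B) a"
    unfolding krylov_cols_def by blast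
  have "krylov_cols (Suc j) r M B \<subseteq> span (krylov_cols k r M B)"
    using ja(1) by (intro subset_trans[OF krylov_cols_mono in_own_span[OF krylov_cols_carrier[OF M]]]) simp
  then have "span (krylov_cols (Suc j) r M B) \<subseteq> span (krylov_cols k r M B)"
    by (rule span_subsetI[OF krylov_cols_carrier[OF M]])
  moreover have "v \<in> span (krylov_cols (Suc j) r M B)"
    using col_pow_feedback_in_span_krylov_cols[OF M B P ja(2)] ja(3) by simp
  ultimately show "v \<in> span (krylov_cols k r M B)" by blast
qed

lemma rank_ctrb_feedback:
  assumes M: "M \<in> carrier_mat n n" and B: "B \<in> carrier_mat n r" and P: "P \<in> carrier_mat r n"
    and r: "0 < r"
  shows "rank (ctrb n r (M + B * P) B) = rank (ctrb n r M B)"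
proof (rule rank_eq_of_cols_in_span)
  have F: "M + B * P \<in> carrier_mat n n" using M B P by auto
  show "set (cols (ctrb n r (M + B * P) B)) \<subseteq> span (set (cols (ctrb n r M B)))"
    unfolding set_cols_ctrb[OF F B r] set_cols_ctrb[OF M B r]
    by (rule krylov_cols_feedback_in_span[OF M B P])
  have "- P \<in> carrier_mat r n" using P by auto
  from krylov_cols_feedback_in_span[OF F B this, of n]
  show "set (cols (ctrb n r M B)) \<subseteq> span (set (cols (ctrb n r (M + B * P) B)))"
    unfolding set_cols_ctrb[OF F B r] set_cols_ctrb[OF M B r] add_mult_uminus_cancel[OF M B P] .
qed (rule ctrb_carrier)+

end

theorem lemma2:
  fixes n r :: nat and Am1 B :: "real mat" and A2 A3 :: "real \<Rightarrow> complex mat"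
  assumes "n \<ge> 1" and "r \<ge> 1"
    and "Am1 \<in> carrier_mat n n" and "B \<in> carrier_mat n r"
    and "L2_matfun n A2" and "L2_matfun n A3"
    and "cond_i n A2 A3 (map_mat complex_of_real Am1) (map_mat complex_of_real B)"
    and "cond_ii n r (map_mat complex_of_real Am1) (map_mat complex_of_real B)"
  shows "\<forall>P \<in> carrier_mat r n.
           cond_i n A2 A3 (map_mat complex_of_real Am1 + map_mat complex_of_real B * P) (map_mat complex_of_real B)
         \<and> cond_ii n r (map_mat complex_of_real Am1 + map_mat complex_of_real B * P) (map_mat complex_of_real B)"
proof
  interpret vec_space "TYPE(complex)" n .
  fix P :: "complex mat" assume P: "P \<in> carrier_mat r n"
  let ?M = "map_mat complex_of_real Am1" and ?B = "map_mat complex_of_real B"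
  have M: "?M \<in> carrier_mat n n" and B: "?B \<in> carrier_mat n r" using assms(3,4) by auto
  have "rank (hjoin (Delta n A2 A3 (?M + ?B * P) l) ?B) = n" for l
    using assms(7) rank_hjoin_feedback[OF Delta_carrier[OF M] B, of "(- (l * exp (- l))) \<cdot>\<^sub>m P"] P
    by (simp add: Delta_feedback[OF M B P] cond_i_def)
  moreover have "rank (ctrb n r (?M + ?B * P) ?B) = n"
    using assms(2,8) rank_ctrb_feedback[OF M B P] by (simp add: cond_ii_def)
  ultimately show "cond_i n A2 A3 (?M + ?B * P) ?B \<and> cond_ii n r (?M + ?B * P) ?B"
    by (simp add: cond_i_def cond_ii_def)
qed

end
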